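(* Let $\mathfrak g\xrightarrow{\mu}\mathfrak h$ be a crossed module of Lie algebras, $\phi:W\to V$ linear, $\rho$ a 2-representation on $\phi$, and $r>2$. Then on $C^{p,q}_r(\mathfrak g_1,\phi)$, $$\delta^{(r-1)}\circ\Delta+\Delta\circ\delta^{(r)}=\delta_{(1)}\circ\Delta_2-\Delta_2\circ\delta_{(1)}\qquad\text{and}\qquad\Delta^2=-(\Delta_2\circ\partial+\partial\circ\Delta_2).$$
   Context: Crossed module: Lie algebras $\mathfrak g,\mathfrak h$, Lie homomorphism $\mu$, action $\mathcal L:\mathfrak h\to\mathrm{Der}(\mathfrak g)$ with $\mu(\mathcal L_yx)=[y,\mu(x)]$, $\mathcal L_{\mu(x_0)}x_1=[x_0,x_1]$; $\mathfrak g\oplus_{\mathcal L}\mathfrak h$ has bracket $[(x_0,y_0),(x_1,y_1)]=([x_0,x_1]+\mathcal L_{y_0}x_1-\mathcal L_{y_1}x_0,[y_0,y_1])$. 2-representation: linear $\rho_0^1:\mathfrak h\to\mathfrak{gl}(W)$, $\rho_0^0:\mathfrak h\to\mathfrak{gl}(V)$, $\rho_1:\mathfrak g\to\mathrm{Hom}(V,W)$ with $\rho_0^1,\rho_0^0$ representations, $\phi\rho_0^1(y)=\rho_0^0(y)\phi$, $\rho_1([x_0,x_1])=\rho_1(x_0)\phi\rho_1(x_1)-\rho_1(x_1)\phi\rho_1(x_0)$, $\rho_0^0(\mu(x))=\phi\rho_1(x)$, $\rho_0^1(\mu(x))=\rho_1(x)\phi$, $\rho_1(\mathcal L_yx)=\rho_0^1(y)\rho_1(x)-\rho_1(x)\rho_0^0(y)$.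 $\mathfrak g_0=\mathfrak h$; for $p\ge1$, $\mathfrak g_p=\mathfrak g^p\oplus\mathfrak h$, elements $(x^0,\dots,x^{p-1};y)$, a Lie algebra via identification with composable strings $(a_0,\dots,a_{p-1})\in(\mathfrak g\oplus_{\mathcal L}\mathfrak h)^p$, $a_j=(x^j,y+\sum_{k>j}\mu(x^k))$, componentwise bracket. Face maps $\partial_k:\mathfrak g_{p+1}\to\mathfrak g_p$: $\partial_0(x^0,\dots,x^p;y)=(x^1,\dots,x^p;y)$, $\partial_k(\dots)=(x^0,\dots,x^{k-1}+x^k,\dots,x^p;y)$ ($0<k\le p$), $\partial_{p+1}(\dots)=(x^0,\dots,x^{p-1};y+\mu(x^p))$, componentwise on tuples; $\hat t_p(x^0,\dots,x^{p-1};y)=y+\sum\mu(x^j)$. $X(j),X(m,n)$: removal of entries. $C^{p,q}_r=\bigwedge^q\mathfrak g_p^*\otimes\bigwedge^r\mathfrak g^*\otimes W$ ($r\ge1$), $C^{p,q}_0=\bigwedge^q\mathfrak g_p^*\otimes V$, elements $\omega(\Xi;Z)$. $\delta^{(r)}\omega(\xi_0,\dots,\xi_q;Z)=\sum_j(-1)^j(\rho^{(r)}(\hat t_p(\xi_j))\omega(\Xi(j);\cdot))(Z)+\sum_{m<n}(-1)^{m+n}\omega([\xi_m,\xi_n],\Xi(m,n);Z)$, $(\rho^{(r)}(y)\beta)(x_1,\dots,x_r)=\rho_0^1(y)\beta(x_1,\dots,x_r)-\sum_k\beta(x_1,\dots,\mathcal L_yx_k,\dots,x_r)$. $\partial\omega(\Xi;Z)=\sum_{k=0}^{p+1}(-1)^k\omega(\partial_k\Xi;Z)$.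 $\delta_{(1)}\omega(\Xi;z_0,\dots,z_r)=\sum_k(-1)^k\rho_0^1(\mu(z_k))\omega(\Xi;Z(k))+\sum_{a<b}(-1)^{a+b}\omega(\Xi;[z_a,z_b],Z(a,b))$. $\Delta:C^{p,q}_r\to C^{p+1,q+1}_{r-1}$, $\Delta\omega(\xi_0,\dots,\xi_q;Z)=\sum_j(-1)^j\omega(\partial_0\Xi(j);x_j^0,Z)$ where $\xi_j=(x_j^0,\dots;y_j)$. $\Delta_2:C^{p,q}_r\to C^{p+1,q+2}_{r-2}$, $\Delta_2\omega(\xi_0,\dots,\xi_{q+1};Z)=\sum_{m<n}(-1)^{m+n}\omega(\partial_0\Xi(m,n);x_m^0,x_n^0,Z)$. *)

theory Defs
  imports Main "HOL.Vector_Spaces"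
begin

definition sgn_pow :: "nat \<Rightarrow> 'w::ab_group_add \<Rightarrow> 'w" where
  "sgn_pow j w = (if even j then w else - w)"

definition remove_nth :: "nat \<Rightarrow> 'a list \<Rightarrow> 'a list" where
  "remove_nth j l = take j l @ drop (Suc j) l"

definition remove2 :: "nat \<Rightarrow> nat \<Rightarrow> 'a list \<Rightarrow> 'a list" where
  "remove2 m n l = remove_nth m (remove_nth n l)"  (* X(m,n), for m < n *)

definition lin_family ::
  "('k::field \<Rightarrow> 'a::ab_group_add \<Rightarrow> 'a) \<Rightarrow> ('k \<Rightarrow> 'u::ab_group_add \<Rightarrow> 'u)
   \<Rightarrow> ('k \<Rightarrow> 'x::ab_group_add \<Rightarrow> 'x) \<Rightarrow> ('a \<Rightarrow> 'u \<Rightarrow> 'x) \<Rightarrow> bool" where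
  "lin_family sa su sx F \<longleftrightarrow>
     (\<forall>a. Vector_Spaces.linear su sx (F a)) \<and>
     (\<forall>a a' u. F (a + a') u = F a u + F a' u) \<and>
     (\<forall>c a u. F (sa c a) u = sx c (F a u))"

definition lie_algebra :: "('k::field \<Rightarrow> 'g::ab_group_add \<Rightarrow> 'g) \<Rightarrow> ('g \<Rightarrow> 'g \<Rightarrow> 'g) \<Rightarrow> bool" where
  "lie_algebra s b \<longleftrightarrow> vector_space s \<and> lin_family s s s b \<and>
     (\<forall>x. b x x = 0) \<and>
     (\<forall>x y z. b x (b y z) + b y (b z x) + b z (b x y) = 0)"

definition crossed_module ::
  "('k::field \<Rightarrow> 'g::ab_group_add \<Rightarrow> 'g) \<Rightarrow> ('k \<Rightarrow> 'h::ab_group_add \<Rightarrow> 'h)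
   \<Rightarrow> ('g \<Rightarrow> 'g \<Rightarrow> 'g) \<Rightarrow> ('h \<Rightarrow> 'h \<Rightarrow> 'h) \<Rightarrow> ('g \<Rightarrow> 'h) \<Rightarrow> ('h \<Rightarrow> 'g \<Rightarrow> 'g) \<Rightarrow> bool" where
  "crossed_module sg sh bg bh mu L \<longleftrightarrow>
     lie_algebra sg bg \<and> lie_algebra sh bh \<and>
     Vector_Spaces.linear sg sh mu \<and> (\<forall>x x'. mu (bg x x') = bh (mu x) (mu x')) \<and>
     lin_family sh sg sg L \<and>
     (\<forall>y x x'. L y (bg x x') = bg (L y x) x' + bg x (L y x')) \<and>
     (\<forall>y y' x. L (bh y y') x = L y (L y' x) - L y' (L y x)) \<and>
     (\<forall>y x. mu (L y x) = bh y (mu x)) \<and>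
     (\<forall>x0 x1. L (mu x0) x1 = bg x0 x1)"

definition two_representation ::
  "('k::field \<Rightarrow> 'g::ab_group_add \<Rightarrow> 'g) \<Rightarrow> ('k \<Rightarrow> 'h::ab_group_add \<Rightarrow> 'h)
   \<Rightarrow> ('k \<Rightarrow> 'v::ab_group_add \<Rightarrow> 'v) \<Rightarrow> ('k \<Rightarrow> 'w::ab_group_add \<Rightarrow> 'w)
   \<Rightarrow> ('g \<Rightarrow> 'g \<Rightarrow> 'g) \<Rightarrow> ('h \<Rightarrow> 'h \<Rightarrow> 'h) \<Rightarrow> ('g \<Rightarrow> 'h) \<Rightarrow> ('h \<Rightarrow> 'g \<Rightarrow> 'g)
   \<Rightarrow> ('w \<Rightarrow> 'v) \<Rightarrow> ('h \<Rightarrow> 'w \<Rightarrow> 'w) \<Rightarrow> ('h \<Rightarrow> 'v \<Rightarrow> 'v) \<Rightarrow> ('g \<Rightarrow> 'v \<Rightarrow> 'w) \<Rightarrow> bool" where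
  "two_representation sg sh sv sw bg bh mu L phi rho01 rho00 rho1 \<longleftrightarrow>
     vector_space sv \<and> vector_space sw \<and> Vector_Spaces.linear sw sv phi \<and>
     lin_family sh sw sw rho01 \<and> lin_family sh sv sv rho00 \<and> lin_family sg sv sw rho1 \<and>
     (\<forall>y y' w. rho01 (bh y y') w = rho01 y (rho01 y' w) - rho01 y' (rho01 y w)) \<and>
     (\<forall>y y' v. rho00 (bh y y') v = rho00 y (rho00 y' v) - rho00 y' (rho00 y v)) \<and>
     (\<forall>y w. phi (rho01 y w) = rho00 y (phi w)) \<and>
     (\<forall>x0 x1 v. rho1 (bg x0 x1) v =
         rho1 x0 (phi (rho1 x1 v)) - rho1 x1 (phi (rho1 x0 v))) \<and>
     (\<forall>x v. rho00 (mu x) v = phi (rho1 x v)) \<and>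
     (\<forall>x w. rho01 (mu x) w = rho1 x (phi w)) \<and>
     (\<forall>y x v. rho1 (L y x) v = rho01 y (rho1 x v) - rho1 x (rho00 y v))"

(* An element (x^0,...,x^{p-1}; y) of g_p is represented as the pair (xs, y) with length xs = p;
   g_0 = h corresponds to ([], y). *)

definition gp :: "nat \<Rightarrow> ('g list \<times> 'h) set" where
  "gp p = {\<xi>. length (fst \<xi>) = p}"

definition gp_add :: "('g::ab_group_add list \<times> 'h::ab_group_add) \<Rightarrow> ('g list \<times> 'h) \<Rightarrow> ('g list \<times> 'h)" where
  "gp_add \<xi> \<eta> = (map (\<lambda>(a,b). a + b) (zip (fst \<xi>) (fst \<eta>)), snd \<xi> + snd \<eta>)"

definition gp_scale :: "('k \<Rightarrow> 'g \<Rightarrow> 'g) \<Rightarrow> ('k \<Rightarrow> 'h \<Rightarrow> 'h) \<Rightarrow> 'k \<Rightarrow> ('g list \<times> 'h) \<Rightarrow> ('g list \<times> 'h)" where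
  "gp_scale sg sh c \<xi> = (map (sg c) (fst \<xi>), sh c (snd \<xi>))"

(* h-component of the j-th entry a_j = (x^j, y + sum_{k>j} mu(x^k)) of the composable string *)
definition string_h :: "('g \<Rightarrow> 'h::comm_monoid_add) \<Rightarrow> ('g list \<times> 'h) \<Rightarrow> nat \<Rightarrow> 'h" where
  "string_h mu \<xi> j = snd \<xi> + (\<Sum>k\<in>{j<..<length (fst \<xi>)}. mu (fst \<xi> ! k))"

(* bracket of g_p, via the identification with composable strings in g \<oplus>_L h, componentwise bracket
   [(x0,y0),(x1,y1)] = ([x0,x1] + L_{y0} x1 - L_{y1} x0, [y0,y1]) *)
definition gp_bracket ::
  "('g::ab_group_add \<Rightarrow> 'g \<Rightarrow> 'g) \<Rightarrow> ('h::ab_group_add \<Rightarrow> 'h \<Rightarrow> 'h) \<Rightarrow> ('g \<Rightarrow> 'h) \<Rightarrow> ('h \<Rightarrow> 'g \<Rightarrow> 'g)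
   \<Rightarrow> ('g list \<times> 'h) \<Rightarrow> ('g list \<times> 'h) \<Rightarrow> ('g list \<times> 'h)" where
  "gp_bracket bg bh mu L \<xi> \<eta> =
     (map (\<lambda>j. bg (fst \<xi> ! j) (fst \<eta> ! j) + L (string_h mu \<xi> j) (fst \<eta> ! j)
                 - L (string_h mu \<eta> j) (fst \<xi> ! j)) [0..<length (fst \<xi>)],
      bh (snd \<xi>) (snd \<eta>))"

definition t_hat :: "('g \<Rightarrow> 'h::comm_monoid_add) \<Rightarrow> ('g list \<times> 'h) \<Rightarrow> 'h" where
  "t_hat mu \<xi> = snd \<xi> + (\<Sum>j<length (fst \<xi>). mu (fst \<xi> ! j))"

(* face maps  \<partial>_k : g_{p+1} -> g_p,  0 \<le> k \<le> p+1 *)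
definition face :: "('g::ab_group_add \<Rightarrow> 'h::ab_group_add) \<Rightarrow> nat \<Rightarrow> nat \<Rightarrow> ('g list \<times> 'h) \<Rightarrow> ('g list \<times> 'h)" where
  "face mu p k \<xi> =
     (if k = 0 then (tl (fst \<xi>), snd \<xi>)
      else if k \<le> p then
        (take (k - 1) (fst \<xi>) @ [fst \<xi> ! (k - 1) + fst \<xi> ! k] @ drop (Suc k) (fst \<xi>), snd \<xi>)
      else (take p (fst \<xi>), snd \<xi> + mu (fst \<xi> ! p)))"

(* a cochain omega(\<Xi>; Z) is a function of a list \<Xi> = [\<xi>_0,...] of elements of g_p and a list
   Z = [z_1,...] of elements of g *)

definition alt_multilinear ::
  "('k::field \<Rightarrow> 'a \<Rightarrow> 'a) \<Rightarrow> ('a \<Rightarrow> 'a \<Rightarrow> 'a) \<Rightarrow> 'a set \<Rightarrow> ('k \<Rightarrow> 'w::ab_group_add \<Rightarrow> 'w)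
   \<Rightarrow> nat \<Rightarrow> ('a list \<Rightarrow> 'w) \<Rightarrow> bool" where
  "alt_multilinear sa ad A sw n f \<longleftrightarrow>
     (\<forall>l i a b. length l = n \<and> set l \<subseteq> A \<and> i < n \<and> a \<in> A \<and> b \<in> A \<longrightarrow>
        f (l[i := ad a b]) = f (l[i := a]) + f (l[i := b])) \<and>
     (\<forall>l i c a. length l = n \<and> set l \<subseteq> A \<and> i < n \<and> a \<in> A \<longrightarrow>
        f (l[i := sa c a]) = sw c (f (l[i := a]))) \<and>
     (\<forall>l i j. length l = n \<and> set l \<subseteq> A \<and> i < n \<and> j < n \<and> i \<noteq> j \<and> l ! i = l ! j \<longrightarrow> f l = 0)"

(* C^{p,q}_r = \<wedge>^q g_p^* \<otimes> \<wedge>^r g^* \<otimes> W   (r \<ge> 1) *)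
definition cochain ::
  "('k::field \<Rightarrow> 'g::ab_group_add \<Rightarrow> 'g) \<Rightarrow> ('k \<Rightarrow> 'h::ab_group_add \<Rightarrow> 'h) \<Rightarrow> ('k \<Rightarrow> 'w::ab_group_add \<Rightarrow> 'w)
   \<Rightarrow> nat \<Rightarrow> nat \<Rightarrow> nat \<Rightarrow> (('g list \<times> 'h) list \<Rightarrow> 'g list \<Rightarrow> 'w) \<Rightarrow> bool" where
  "cochain sg sh sw p q r \<omega> \<longleftrightarrow>
     (\<forall>Z. length Z = r \<longrightarrow>
        alt_multilinear (gp_scale sg sh) gp_add (gp p) sw q (\<lambda>\<Xi>. \<omega> \<Xi> Z)) \<and>
     (\<forall>\<Xi>. length \<Xi> = q \<and> set \<Xi> \<subseteq> gp p \<longrightarrow> alt_multilinear sg (+) UNIV sw r (\<omega> \<Xi>))"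

definition rho_r :: "('h \<Rightarrow> 'g \<Rightarrow> 'g) \<Rightarrow> ('h \<Rightarrow> 'w::ab_group_add \<Rightarrow> 'w) \<Rightarrow> 'h \<Rightarrow> ('g list \<Rightarrow> 'w) \<Rightarrow> 'g list \<Rightarrow> 'w" where
  "rho_r L rho01 y \<beta> Z = rho01 y (\<beta> Z) - (\<Sum>k<length Z. \<beta> (Z[k := L y (Z ! k)]))"

(* \<delta>^{(r)} : C^{p,q}_r -> C^{p,q+1}_r *)
definition delta_r ::
  "('g::ab_group_add \<Rightarrow> 'g \<Rightarrow> 'g) \<Rightarrow> ('h::ab_group_add \<Rightarrow> 'h \<Rightarrow> 'h) \<Rightarrow> ('g \<Rightarrow> 'h) \<Rightarrow> ('h \<Rightarrow> 'g \<Rightarrow> 'g)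
   \<Rightarrow> ('h \<Rightarrow> 'w::ab_group_add \<Rightarrow> 'w) \<Rightarrow> (('g list \<times> 'h) list \<Rightarrow> 'g list \<Rightarrow> 'w)
   \<Rightarrow> ('g list \<times> 'h) list \<Rightarrow> 'g list \<Rightarrow> 'w" where
  "delta_r bg bh mu L rho01 \<omega> \<Xi> Z =
     (\<Sum>j<length \<Xi>. sgn_pow j (rho_r L rho01 (t_hat mu (\<Xi> ! j)) (\<omega> (remove_nth j \<Xi>)) Z)) +
     (\<Sum>(m, n)\<in>{(m, n). m < n \<and> n < length \<Xi>}.
        sgn_pow (m + n) (\<omega> (gp_bracket bg bh mu L (\<Xi> ! m) (\<Xi> ! n) # remove2 m n \<Xi>) Z))"

(* \<partial> : C^{p,q}_r -> C^{p+1,q}_r *)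
definition bd ::
  "('g::ab_group_add \<Rightarrow> 'h::ab_group_add) \<Rightarrow> nat \<Rightarrow> (('g list \<times> 'h) list \<Rightarrow> 'g list \<Rightarrow> 'w::ab_group_add)
   \<Rightarrow> ('g list \<times> 'h) list \<Rightarrow> 'g list \<Rightarrow> 'w" where
  "bd mu p \<omega> \<Xi> Z = (\<Sum>k\<le>p + 1. sgn_pow k (\<omega> (map (face mu p k) \<Xi>) Z))"

(* \<delta>_{(1)} : C^{p,q}_r -> C^{p,q}_{r+1} *)
definition delta_1 ::
  "('g::ab_group_add \<Rightarrow> 'g \<Rightarrow> 'g) \<Rightarrow> ('g \<Rightarrow> 'h) \<Rightarrow> ('h \<Rightarrow> 'w::ab_group_add \<Rightarrow> 'w)
   \<Rightarrow> (('g list \<times> 'h) list \<Rightarrow> 'g list \<Rightarrow> 'w) \<Rightarrow> ('g list \<times> 'h) list \<Rightarrow> 'g list \<Rightarrow> 'w" where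
  "delta_1 bg mu rho01 \<omega> \<Xi> Z =
     (\<Sum>k<length Z. sgn_pow k (rho01 (mu (Z ! k)) (\<omega> \<Xi> (remove_nth k Z)))) +
     (\<Sum>(a, b)\<in>{(a, b). a < b \<and> b < length Z}.
        sgn_pow (a + b) (\<omega> \<Xi> (bg (Z ! a) (Z ! b) # remove2 a b Z)))"

(* \<Delta> : C^{p,q}_r -> C^{p+1,q+1}_{r-1};  x_j^0 = first g-entry of \<xi>_j *)
definition Delta ::
  "(('g list \<times> 'h) list \<Rightarrow> 'g list \<Rightarrow> 'w::ab_group_add) \<Rightarrow> ('g list \<times> 'h) list \<Rightarrow> 'g list \<Rightarrow> 'w" where
  "Delta \<omega> \<Xi> Z =
     (\<Sum>j<length \<Xi>. sgn_pow j (\<omega> (map (\<lambda>\<xi>. (tl (fst \<xi>), snd \<xi>)) (remove_nth j \<Xi>))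
                                  (hd (fst (\<Xi> ! j)) # Z)))"

(* \<Delta>_2 : C^{p,q}_r -> C^{p+1,q+2}_{r-2} *)
definition Delta2 ::
  "(('g list \<times> 'h) list \<Rightarrow> 'g list \<Rightarrow> 'w::ab_group_add) \<Rightarrow> ('g list \<times> 'h) list \<Rightarrow> 'g list \<Rightarrow> 'w" where
  "Delta2 \<omega> \<Xi> Z =
     (\<Sum>(m, n)\<in>{(m, n). m < n \<and> n < length \<Xi>}.
        sgn_pow (m + n) (\<omega> (map (\<lambda>\<xi>. (tl (fst \<xi>), snd \<xi>)) (remove2 m n \<Xi>))
                             (hd (fst (\<Xi> ! m)) # hd (fst (\<Xi> ! n)) # Z)))"

end

(*
  Every operator involved is a signed sum over the entries of Xi that it removes. After
  reindexing (skip j enumerates the positions other than j), both sides of each identity become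
  sums over ordered pairs m < n of positions of Xi, and the identities are checked pair by pair.

  For Delta^2, the pair term is omega(b_m, a_n) - omega(b_n, a_m), where a and b are the first and
  second g-entries. On the other side the faces d_k with k >= 2 commute with dropping the first
  entry, so those terms of Delta_2 bd and bd Delta_2 cancel; d_0 and d_1 leave
  omega(a_m, a_n) + omega(b_m, b_n) - omega(a_m + b_m, a_n + b_n), which is the pair term up to
  sign by bilinearity and alternation.

  For the anticommutator, the terms of delta(Delta omega) and Delta(delta omega) containing a
  bracket [d_0 xi_m, d_0 xi_n] next to a third entry cancel by a parity count of their signs. What
  is left for a pair are the rho-parts and the term with the first g-entry
  [x_m^0, x_n^0] + L_(t_hat d_0 xi_m) x_n^0 - L_(t_hat d_0 xi_n) x_m^0 of [xi_m, xi_n]. Since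
  t_hat xi = t_hat (d_0 xi) + mu x^0 and L_(mu x) = [x, -], these add up to the pair terms of
  delta_1 (Delta_2 omega) - Delta_2 (delta_1 omega).
*)
theory Submission
  imports Defs
begin

lemma sgn_pow_0 [simp]: "sgn_pow 0 w = w"
  by (simp add: sgn_pow_def)

lemma sgn_pow_Suc [simp]: "sgn_pow (Suc k) w = - sgn_pow k w"
  by (simp add: sgn_pow_def)

lemma additive_sgn_pow: "additive (sgn_pow k)"
  by standard (simp add: sgn_pow_def)

lemma sgn_pow_add [simp]: "sgn_pow k (a + b) = sgn_pow k a + sgn_pow k b"
  by (rule additive.add[OF additive_sgn_pow])

lemma sgn_pow_minus [simp]: "sgn_pow k (- a) = - sgn_pow k a"
  by (rule additive.minus[OF additive_sgn_pow])

lemma sgn_pow_diff [simp]: "sgn_pow k (a - b) = sgn_pow k a - sgn_pow k b"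
  by (rule additive.diff[OF additive_sgn_pow])

lemma sgn_pow_sum: "sgn_pow k (sum f A) = (\<Sum>i\<in>A. sgn_pow k (f i))"
  by (rule additive.sum[OF additive_sgn_pow])

lemma sgn_pow_add_exp: "sgn_pow (a + b) w = sgn_pow a (sgn_pow b w)"
  by (simp add: sgn_pow_def)

lemma sgn_pow_commute: "sgn_pow a (sgn_pow b w) = sgn_pow b (sgn_pow a w)"
  by (simp add: sgn_pow_def)

lemma sgn_pow_odd_cancel: "odd (a + b) \<Longrightarrow> sgn_pow a w + sgn_pow b w = 0"
  by (auto simp: sgn_pow_def)

lemma (in additive) sgn_pow: "f (sgn_pow k x) = sgn_pow k (f x)"
  by (simp add: sgn_pow_def minus)

definition skip :: "nat \<Rightarrow> nat \<Rightarrow> nat" where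
  "skip j i = (if i < j then i else Suc i)"

definition unskip :: "nat \<Rightarrow> nat \<Rightarrow> nat" where
  "unskip j v = (if v < j then v else v - 1)"

lemma skip_neq [simp]: "skip j i \<noteq> j"
  by (simp add: skip_def)

lemma unskip_skip [simp]: "unskip j (skip j i) = i"
  by (simp add: skip_def unskip_def)

lemma skip_unskip [simp]: "v \<noteq> j \<Longrightarrow> skip j (unskip j v) = v"
  by (auto simp: skip_def unskip_def)

lemma skip_eq_iff [simp]: "skip j a = skip j b \<longleftrightarrow> a = b"
  by (simp add: skip_def)

lemma skip_less_iff [simp]: "skip j a < skip j b \<longleftrightarrow> a < b"
  by (simp add: skip_def)

lemma skip_less [simp]: "i < j \<Longrightarrow> skip j i = i"
  by (simp add: skip_def)

lemma skip_0 [simp]: "skip 0 i = Suc i"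
  by (simp add: skip_def)

lemma skip_Suc_Suc [simp]: "skip (Suc j) (Suc i) = Suc (skip j i)"
  by (simp add: skip_def)

lemma skip_eq_0_iff: "skip (Suc j) a = 0 \<longleftrightarrow> a = 0"
  by (simp add: skip_def)

lemma skip_less_bound: "j < N \<Longrightarrow> skip j i < N \<longleftrightarrow> i < N - 1"
  by (auto simp: skip_def)

lemma skip_image_Compl: "skip j ` (- B) = - insert j (skip j ` B)"
proof (intro set_eqI iffI)
  fix v assume "v \<in> - insert j (skip j ` B)"
  then have "v \<noteq> j" and "v \<notin> skip j ` B"
    by auto
  then show "v \<in> skip j ` (- B)"
    by (metis ComplI image_eqI skip_unskip)
qed auto

lemma skip_image_lessThan: "j < N \<Longrightarrow> skip j ` {..<N - 1} = {..<N} - {j}"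
proof (intro set_eqI iffI)
  fix v assume "j < N" and v: "v \<in> {..<N} - {j}"
  then have "unskip j v \<in> {..<N - 1}"
    by (auto simp: unskip_def)
  moreover have "v = skip j (unskip j v)"
    using v by simp
  ultimately show "v \<in> skip j ` {..<N - 1}"
    by blast
qed (auto simp: skip_less_bound)

lemma remove_nth_Cons_0 [simp]: "remove_nth 0 (x # l) = l"
  by (simp add: remove_nth_def)

lemma remove_nth_Cons_Suc [simp]: "remove_nth (Suc j) (x # l) = x # remove_nth j l"
  by (simp add: remove_nth_def)

lemma length_remove_nth [simp]: "j < length l \<Longrightarrow> length (remove_nth j l) = length l - 1"
  by (simp add: remove_nth_def)

lemma remove_nth_map: "remove_nth j (map f l) = map f (remove_nth j l)"
  by (simp add: remove_nth_def drop_map take_map)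

lemma nth_remove_nth: "Suc i < length l \<Longrightarrow> remove_nth j l ! i = l ! skip j i"
  by (auto simp: remove_nth_def skip_def nth_append min_def)

lemma remove_nth_list_update [simp]: "remove_nth k (l[k := x]) = remove_nth k l"
  by (simp add: remove_nth_def)

lemma remove_nth_eq_nths: "remove_nth j l = nths l (- {j})"
proof (induction l arbitrary: j)
  case (Cons x l)
  then show ?case
  proof (cases j)
    case (Suc j')
    then have "{i. Suc i \<in> - {j}} = - {j'}"
      by auto
    then show ?thesis
      using Cons[of j'] Suc by (simp add: nths_Cons)
  qed (simp add: nths_Cons nths_all)
qed (simp add: remove_nth_def)

lemma nths_remove_nth: "nths (remove_nth j l) A = nths l (skip j ` A)"
proof (induction l arbitrary: j A)
  case (Cons x l)
  show ?case
  proof (cases j)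
    case 0
    have "{i. Suc i \<in> skip 0 ` A} = A" and "0 \<notin> skip 0 ` A"
      by auto
    then show ?thesis
      using 0 by (simp add: nths_Cons)
  next
    case (Suc j')
    have "{i. Suc i \<in> skip (Suc j') ` A} = skip j' ` {i. Suc i \<in> A}"
    proof (intro set_eqI iffI)
      fix i assume "i \<in> {i. Suc i \<in> skip (Suc j') ` A}"
      then obtain a where "a \<in> A" "skip (Suc j') a = Suc i"
        by auto
      then show "i \<in> skip j' ` {i. Suc i \<in> A}"
        by (cases a) auto
    qed (auto intro: image_eqI[where x = "Suc _"])
    moreover have "0 \<in> skip (Suc j') ` A \<longleftrightarrow> 0 \<in> A"
      by (auto simp: skip_eq_0_iff image_iff)
    ultimately show ?thesis
      using Suc Cons[of j'] by (simp add: nths_Cons)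
  qed
qed (simp add: remove_nth_def)

lemma remove_nth_remove_nth: "remove_nth i (remove_nth j l) = nths l (- {j, skip j i})"
  by (simp add: remove_nth_eq_nths[of i] nths_remove_nth skip_image_Compl)

lemma remove_nth_remove_nth_remove_nth:
  "remove_nth i (remove_nth m (remove_nth n l)) = nths l (- {n, skip n m, skip n (skip m i)})"
  by (simp add: remove_nth_eq_nths[of i] nths_remove_nth skip_image_Compl insert_commute)

lemma remove2_eq_nths: "m < n \<Longrightarrow> remove2 m n l = nths l (- {m, n})"
  by (simp add: remove2_def remove_nth_remove_nth insert_commute)

lemma length_nths_Compl2:
  assumes "u < length l" "v < length l" "u \<noteq> v"
  shows "length (nths l (- {u, v})) = length l - 2"
proof -
  have "{i. i < length l \<and> i \<in> - {u, v}} = {..<length l} - {u, v}"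
    by auto
  then show ?thesis
    using assms by (simp add: length_nths card_Diff_subset)
qed

section \<open>Alternating maps\<close>

locale alternating_map =
  fixes f :: "'a::ab_group_add list \<Rightarrow> 'b::ab_group_add" and n :: nat
  assumes add_slot: "length l = n \<Longrightarrow> i < n \<Longrightarrow> f (l[i := a + b]) = f (l[i := a]) + f (l[i := b])"
    and eq_slots: "length l = n \<Longrightarrow> i < n \<Longrightarrow> j < n \<Longrightarrow> i \<noteq> j \<Longrightarrow> l ! i = l ! j \<Longrightarrow> f l = 0"
begin

lemma additive_slot: "length P + Suc (length S) = n \<Longrightarrow> additive (\<lambda>a. f (P @ a # S))"
  using add_slot[of "P @ _ # S" "length P"] by unfold_locales simp

lemma repeated_slot: "length P + Suc (Suc (length S)) = n \<Longrightarrow> f (P @ c # c # S) = 0"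
  by (rule eq_slots[of _ "length P" "Suc (length P)"]) (auto simp: nth_append)

lemma swap_slots:
  assumes len: "length P + Suc (Suc (length S)) = n"
  shows "f (P @ a # b # S) = - f (P @ b # a # S)"
proof -
  have add1: "additive (\<lambda>x. f (P @ x # c # S))" for c
    using len by (intro additive_slot) simp
  have add2: "additive (\<lambda>x. f ((P @ [c]) @ x # S))" for c
    using len by (intro additive_slot) simp
  have "0 = f (P @ (a + b) # (a + b) # S)"
    using repeated_slot[OF len] by simp
  also have "\<dots> = f (P @ a # a # S) + f (P @ a # b # S) + (f (P @ b # a # S) + f (P @ b # b # S))"
    using additive.add[OF add1] additive.add[OF add2] by simp
  also have "\<dots> = f (P @ a # b # S) + f (P @ b # a # S)"
    using repeated_slot[OF len] by simp
  finally show ?thesis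
    by (simp add: eq_neg_iff_add_eq_0)
qed

lemma move_to_front:
  "length P + length l = n \<Longrightarrow> i < length l \<Longrightarrow>
   f (P @ l) = sgn_pow i (f (P @ (l ! i) # remove_nth i l))"
proof (induction i arbitrary: P l)
  case 0
  then show ?case
    by (cases l) auto
next
  case (Suc i)
  then obtain x l' where l: "l = x # l'"
    by (cases l) auto
  have "f (P @ l) = sgn_pow i (f ((P @ [x]) @ (l' ! i) # remove_nth i l'))"
    using Suc.IH[of "P @ [x]" l'] Suc.prems l by simp
  also have "\<dots> = sgn_pow i (- f (P @ (l' ! i) # x # remove_nth i l'))"
    using swap_slots[of P "remove_nth i l'" x "l' ! i"] Suc.prems l by simp
  finally show ?case
    using l by simp
qed

lemma rotate3: "length S + 3 = n \<Longrightarrow> f (a # b # c # S) = f (c # a # b # S)"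
  using move_to_front[of "[]" "a # b # c # S" 2] by (simp add: numeral_2_eq_2)

lemma update_to_front:
  "length Z + 1 = n \<Longrightarrow> k < length Z \<Longrightarrow> f (a # Z[k := c]) = - sgn_pow k (f (c # a # remove_nth k Z))"
  using move_to_front[of "[]" "a # Z[k := c]" "Suc k"] by simp

lemma cross_terms:
  assumes "length S + 2 = n"
  shows "f (a # a' # S) + f (b # b' # S) - f ((a + b) # (a' + b') # S) = f (b' # a # S) - f (b # a' # S)"
proof -
  have add1: "additive (\<lambda>x. f (x # c # S))" and add2: "additive (\<lambda>x. f (c # x # S))" for c
    using additive_slot[of "[]" "c # S"] additive_slot[of "[c]" S] assms by simp_all
  have "f ((a + b) # (a' + b') # S) = f (a # a' # S) + f (a # b' # S) + f (b # a' # S) + f (b # b' # S)"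
    using additive.add[OF add1] additive.add[OF add2] by simp
  moreover have "f (a # b' # S) = - f (b' # a # S)"
    using swap_slots[of "[]" S a b'] assms by simp
  ultimately show ?thesis
    by (simp add: algebra_simps)
qed

end

section \<open>Sums over ordered pairs\<close>

definition ordered_pairs :: "nat \<Rightarrow> (nat \<times> nat) set" where
  "ordered_pairs N = {(m, n). m < n \<and> n < N}"

lemma finite_ordered_pairs [simp]: "finite (ordered_pairs N)"
  by (rule finite_subset[of _ "{..<N} \<times> {..<N}"]) (auto simp: ordered_pairs_def)

lemma sum_ordered_pairs_first: "(\<Sum>(m, n)\<in>ordered_pairs N. G m n) = (\<Sum>m<N. \<Sum>n\<in>{m<..<N}. G m n)"
proof -
  have "ordered_pairs N = Sigma {..<N} (\<lambda>m. {m<..<N})"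
    by (auto simp: ordered_pairs_def)
  then show ?thesis
    by (simp add: sum.Sigma)
qed

lemma sum_ordered_pairs_second: "(\<Sum>(m, n)\<in>ordered_pairs N. G m n) = (\<Sum>n<N. \<Sum>m<n. G m n)"
proof -
  have "(\<Sum>n<N. \<Sum>m<n. G m n) = (\<Sum>n<N. \<Sum>m\<in>{m. m \<in> {..<N} \<and> m < n}. G m n)"
    by (intro sum.cong) auto
  also have "\<dots> = (\<Sum>m<N. \<Sum>n\<in>{n. n \<in> {..<N} \<and> m < n}. G m n)"
    by (rule sum.swap_restrict) auto
  also have "\<dots> = (\<Sum>m<N. \<Sum>n\<in>{m<..<N}. G m n)"
    by (intro sum.cong) auto
  finally show ?thesis
    by (simp add: sum_ordered_pairs_first)
qed

lemma sum_distinct_pairs: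
  "(\<Sum>u<N. \<Sum>v\<in>{..<N} - {u}. F u v) = (\<Sum>(m, n)\<in>ordered_pairs N. F m n + F n m)"
proof -
  have "(\<Sum>v\<in>{..<N} - {u}. F u v) = (\<Sum>v<u. F u v) + (\<Sum>v\<in>{u<..<N}. F u v)" if "u < N" for u
  proof -
    have "{..<N} - {u} = {..<u} \<union> {u<..<N}" and "{..<u} \<inter> {u<..<N} = {}"
      using that by auto
    then show ?thesis
      by (simp add: sum.union_disjoint)
  qed
  then have "(\<Sum>u<N. \<Sum>v\<in>{..<N} - {u}. F u v) = (\<Sum>u<N. (\<Sum>v<u. F u v) + (\<Sum>v\<in>{u<..<N}. F u v))"
    by simp
  also have "\<dots> = (\<Sum>(m, n)\<in>ordered_pairs N. F n m) + (\<Sum>(m, n)\<in>ordered_pairs N. F m n)"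
    unfolding sum_ordered_pairs_second[of "\<lambda>m n. F n m"] sum_ordered_pairs_first[of F]
    by (simp add: sum.distrib)
  finally show ?thesis
    by (simp add: sum.distrib split_def add.commute)
qed

lemma sum_skip_reindex:
  assumes "j < N"
  shows "(\<Sum>i<N - 1. F (skip j i)) = (\<Sum>v\<in>{..<N} - {j}. F v)"
proof -
  have "(\<Sum>v\<in>skip j ` {..<N - 1}. F v) = (\<Sum>i<N - 1. F (skip j i))"
    by (simp add: sum.reindex inj_on_def)
  then show ?thesis
    using skip_image_lessThan[OF assms] by simp
qed

lemma sum_skip_skip_reindex:
  assumes "m < n" "n < N"
  shows "(\<Sum>i<N - 2. F (skip n (skip m i))) = (\<Sum>s\<in>{..<N} - {m, n}. F s)"
proof -
  have "N - 2 = (N - 1) - 1"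
    by arith
  then have "(\<Sum>i<N - 2. F (skip n (skip m i))) = (\<Sum>i<(N - 1) - 1. (\<lambda>c. F (skip n c)) (skip m i))"
    by (simp only:)
  also have "\<dots> = (\<Sum>c\<in>{..<N - 1} - {m}. F (skip n c))"
    using assms by (intro sum_skip_reindex) simp
  also have "\<dots> = (\<Sum>s\<in>skip n ` ({..<N - 1} - {m}). F s)"
    by (rule sum.reindex[symmetric, unfolded comp_def]) (auto simp: inj_on_def)
  also have "skip n ` ({..<N - 1} - {m}) = skip n ` {..<N - 1} - {skip n m}"
    by (simp add: image_set_diff inj_on_def)
  also have "\<dots> = {..<N} - {n} - {m}"
    using assms by (simp only: skip_image_lessThan[OF assms(2)] skip_less)
  also have "\<dots> = {..<N} - {m, n}"
    by auto
  finally show ?thesis .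
qed

lemma sum_ordered_pairs_skip_reindex:
  assumes v: "v < N"
  shows "(\<Sum>(m, n)\<in>ordered_pairs (N - 1). F (skip v m) (skip v n))
       = (\<Sum>(m, n)\<in>{(m, n)\<in>ordered_pairs N. m \<noteq> v \<and> n \<noteq> v}. F m n)"
proof -
  let ?h = "\<lambda>(a, b). (skip v a, skip v b)"
  have "inj_on ?h (ordered_pairs (N - 1))"
    by (auto simp: inj_on_def)
  moreover have "?h ` ordered_pairs (N - 1) = {(m, n)\<in>ordered_pairs N. m \<noteq> v \<and> n \<noteq> v}"
  proof (intro set_eqI iffI)
    fix x assume "x \<in> {(m, n)\<in>ordered_pairs N. m \<noteq> v \<and> n \<noteq> v}"
    then obtain m n where mn: "x = (m, n)" "m < n" "n < N" "m \<noteq> v" "n \<noteq> v"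
      by (auto simp: ordered_pairs_def)
    then have "(unskip v m, unskip v n) \<in> ordered_pairs (N - 1)"
      using v skip_less_iff[of v "unskip v m" "unskip v n"] skip_less_bound[of v N "unskip v n"]
      by (simp add: ordered_pairs_def)
    moreover have "x = ?h (unskip v m, unskip v n)"
      using mn by simp
    ultimately show "x \<in> ?h ` ordered_pairs (N - 1)"
      by (rule rev_image_eqI)
  qed (use v in \<open>auto simp: ordered_pairs_def skip_less_bound\<close>)
  ultimately show ?thesis
    using sum.reindex[of ?h "ordered_pairs (N - 1)" "\<lambda>(m, n). F m n"] by (simp add: split_def)
qed

lemma sum_swap_ordered_pairs:
  "(\<Sum>v<N. \<Sum>(m, n)\<in>{(m, n)\<in>ordered_pairs N. m \<noteq> v \<and> n \<noteq> v}. G v m n)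
   = (\<Sum>(m, n)\<in>ordered_pairs N. \<Sum>v\<in>{..<N} - {m, n}. G v m n)"
proof -
  have "(\<Sum>v<N. \<Sum>(m, n)\<in>{(m, n)\<in>ordered_pairs N. m \<noteq> v \<and> n \<noteq> v}. G v m n)
      = (\<Sum>v<N. \<Sum>y\<in>{y. y \<in> ordered_pairs N \<and> fst y \<noteq> v \<and> snd y \<noteq> v}. G v (fst y) (snd y))"
    by (intro sum.cong) (auto simp: split_def)
  also have "\<dots> = (\<Sum>y\<in>ordered_pairs N. \<Sum>v\<in>{v. v \<in> {..<N} \<and> fst y \<noteq> v \<and> snd y \<noteq> v}. G v (fst y) (snd y))"
    by (rule sum.swap_restrict) auto
  also have "\<dots> = (\<Sum>(m, n)\<in>ordered_pairs N. \<Sum>v\<in>{..<N} - {m, n}. G v m n)"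
    by (intro sum.cong) (auto simp: split_def intro!: sum.cong)
  finally show ?thesis .
qed

lemma sum_sgn_pow_skip_antisym:
  "(\<Sum>j<N. sgn_pow j (\<Sum>i<N - 1. sgn_pow i (F j (skip j i))))
   = (\<Sum>(m, n)\<in>ordered_pairs N. sgn_pow (m + n) (F n m - F m n))"
proof -
  have "(\<Sum>i<N - 1. sgn_pow i (F j (skip j i))) = (\<Sum>v\<in>{..<N} - {j}. sgn_pow (unskip j v) (F j v))"
    if "j < N" for j
    using sum_skip_reindex[OF that, of "\<lambda>v. sgn_pow (unskip j v) (F j v)"] by simp
  then have "(\<Sum>j<N. sgn_pow j (\<Sum>i<N - 1. sgn_pow i (F j (skip j i))))
      = (\<Sum>j<N. \<Sum>v\<in>{..<N} - {j}. sgn_pow j (sgn_pow (unskip j v) (F j v)))"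
    by (intro sum.cong refl) (simp add: sgn_pow_sum)
  also have "\<dots> = (\<Sum>(m, n)\<in>ordered_pairs N.
                     sgn_pow m (sgn_pow (unskip m n) (F m n)) + sgn_pow n (sgn_pow (unskip n m) (F n m)))"
    by (rule sum_distinct_pairs)
  also have "\<dots> = (\<Sum>(m, n)\<in>ordered_pairs N. sgn_pow (m + n) (F n m - F m n))"
  proof (intro sum.cong refl, clarsimp simp: ordered_pairs_def)
    fix m n :: nat assume "m < n"
    then have "sgn_pow m (sgn_pow (unskip m n) x) = - sgn_pow (m + n) x"
      and "sgn_pow n (sgn_pow (unskip n m) x) = sgn_pow (m + n) x" for x :: 'a
      by (auto simp: unskip_def sgn_pow_def)
    then show "sgn_pow m (sgn_pow (unskip m n) (F m n)) + sgn_pow n (sgn_pow (unskip n m) (F n m))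
             = sgn_pow (m + n) (F n m) - sgn_pow (m + n) (F m n)"
      by simp
  qed
  finally show ?thesis .
qed

lemma sum_sgn_pow_unskip_cancel:
  "(\<Sum>(m, n)\<in>ordered_pairs N. sgn_pow (m + n) (\<Sum>s\<in>{..<N} - {m, n}. sgn_pow (Suc (unskip m (unskip n s))) (G m n s)))
   + (\<Sum>(m, n)\<in>ordered_pairs N. \<Sum>s\<in>{..<N} - {m, n}. sgn_pow s (sgn_pow (unskip s m + unskip s n) (G m n s))) = 0"
  unfolding sum.distrib[symmetric]
proof (intro sum.neutral ballI, clarify)
  fix m n assume "(m, n) \<in> ordered_pairs N"
  then have "m < n"
    by (simp add: ordered_pairs_def)
  have "sgn_pow (m + n) (sgn_pow (Suc (unskip m (unskip n s))) x) + sgn_pow s (sgn_pow (unskip s m + unskip s n) x) = 0"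
    if "s \<noteq> m" "s \<noteq> n" for s and x :: 'a
    unfolding sgn_pow_add_exp[symmetric]
    using \<open>m < n\<close> that by (intro sgn_pow_odd_cancel) (auto simp: unskip_def)
  then show "sgn_pow (m + n) (\<Sum>s\<in>{..<N} - {m, n}. sgn_pow (Suc (unskip m (unskip n s))) (G m n s))
      + (\<Sum>s\<in>{..<N} - {m, n}. sgn_pow s (sgn_pow (unskip s m + unskip s n) (G m n s))) = 0"
    unfolding sgn_pow_sum sum.distrib[symmetric] by (intro sum.neutral) auto
qed

(* For xi = (x^0, ..., x^(p-1); y): gp_head xi = x^0, and gp_tail xi is the face d_0 xi. *)
definition gp_head :: "('g list \<times> 'h) \<Rightarrow> 'g" where
  "gp_head \<xi> = hd (fst \<xi>)"

definition gp_tail :: "('g list \<times> 'h) \<Rightarrow> ('g list \<times> 'h)" where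
  "gp_tail \<xi> = (tl (fst \<xi>), snd \<xi>)"

lemma gp_tail_simps [simp]: "fst (gp_tail \<xi>) = tl (fst \<xi>)" "snd (gp_tail \<xi>) = snd \<xi>"
  by (simp_all add: gp_tail_def)

lemma mem_gp_iff [simp]: "\<xi> \<in> gp p \<longleftrightarrow> length (fst \<xi>) = p"
  by (simp add: gp_def)

lemma length_nth_gp: "set \<Xi> \<subseteq> gp p \<Longrightarrow> i < length \<Xi> \<Longrightarrow> length (fst (\<Xi> ! i)) = p"
  by (metis mem_gp_iff nth_mem subsetD)

lemma Delta_eq:
  "Delta w \<Xi> Y = (\<Sum>j<length \<Xi>. sgn_pow j (w (map gp_tail (remove_nth j \<Xi>)) (gp_head (\<Xi> ! j) # Y)))"
  unfolding Delta_def gp_tail_def gp_head_def ..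

lemma Delta2_eq:
  "Delta2 w \<Xi> Y = (\<Sum>(m, n)\<in>ordered_pairs (length \<Xi>).
     sgn_pow (m + n) (w (map gp_tail (remove2 m n \<Xi>)) (gp_head (\<Xi> ! m) # gp_head (\<Xi> ! n) # Y)))"
  unfolding Delta2_def gp_tail_def gp_head_def ordered_pairs_def ..

lemma delta_r_eq:
  "delta_r bg bh mu L rho01 w \<Xi> Y =
     (\<Sum>j<length \<Xi>. sgn_pow j (rho_r L rho01 (t_hat mu (\<Xi> ! j)) (w (remove_nth j \<Xi>)) Y)) +
     (\<Sum>(m, n)\<in>ordered_pairs (length \<Xi>).
        sgn_pow (m + n) (w (gp_bracket bg bh mu L (\<Xi> ! m) (\<Xi> ! n) # remove2 m n \<Xi>) Y))"
  unfolding delta_r_def ordered_pairs_def ..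

lemma delta_1_eq:
  "delta_1 bg mu rho01 w \<Xi> Y =
     (\<Sum>k<length Y. sgn_pow k (rho01 (mu (Y ! k)) (w \<Xi> (remove_nth k Y)))) +
     (\<Sum>(a, b)\<in>ordered_pairs (length Y). sgn_pow (a + b) (w \<Xi> (bg (Y ! a) (Y ! b) # remove2 a b Y)))"
  unfolding delta_1_def ordered_pairs_def ..

lemma Delta_remove_nth:
  assumes "j < length \<Xi>"
  shows "Delta w (remove_nth j \<Xi>) Y = (\<Sum>i<length \<Xi> - 1.
           sgn_pow i (w (map gp_tail (nths \<Xi> (- {j, skip j i}))) (gp_head (\<Xi> ! skip j i) # Y)))"
  unfolding Delta_eq
proof (rule sum.cong)
  show "{..<length (remove_nth j \<Xi>)} = {..<length \<Xi> - 1}"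
    using assms by simp
next
  fix i assume "i \<in> {..<length \<Xi> - 1}"
  then have "remove_nth j \<Xi> ! i = \<Xi> ! skip j i"
    using assms by (simp add: nth_remove_nth)
  then show "sgn_pow i (w (map gp_tail (remove_nth i (remove_nth j \<Xi>))) (gp_head (remove_nth j \<Xi> ! i) # Y))
     = sgn_pow i (w (map gp_tail (nths \<Xi> (- {j, skip j i}))) (gp_head (\<Xi> ! skip j i) # Y))"
    by (simp add: remove_nth_remove_nth)
qed

lemma Delta_Cons:
  "Delta w (\<beta> # E) Y = w (map gp_tail E) (gp_head \<beta> # Y)
     + (\<Sum>i<length E. sgn_pow (Suc i) (w (gp_tail \<beta> # map gp_tail (remove_nth i E)) (gp_head (E ! i) # Y)))"
  unfolding Delta_eq by (simp add: sum.lessThan_Suc_shift del: sum.lessThan_Suc)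

lemma set_nths_subset_gp: "set \<Xi> \<subseteq> gp p \<Longrightarrow> set (nths \<Xi> A) \<subseteq> gp p"
  by (meson set_nths_subset order_trans)

lemma set_map_gp_tail: "set \<Xi> \<subseteq> gp (Suc p) \<Longrightarrow> set (map gp_tail \<Xi>) \<subseteq> gp p"
  by auto

lemma face_0: "face mu p 0 \<xi> = gp_tail \<xi>"
  by (simp add: face_def gp_tail_def)

lemma
  assumes "length (fst \<xi>) = p + 2"
  shows gp_tail_face_1: "gp_tail (face mu (p + 1) 1 \<xi>) = gp_tail (gp_tail \<xi>)"
    and gp_head_face_1: "gp_head (face mu (p + 1) 1 \<xi>) = gp_head \<xi> + gp_head (gp_tail \<xi>)"
proof -
  obtain x z zs where "fst \<xi> = x # z # zs"
    using assms by (cases "fst \<xi>"; cases "tl (fst \<xi>)") auto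
  then show "gp_tail (face mu (p + 1) 1 \<xi>) = gp_tail (gp_tail \<xi>)"
    and "gp_head (face mu (p + 1) 1 \<xi>) = gp_head \<xi> + gp_head (gp_tail \<xi>)"
    by (simp_all add: face_def gp_tail_def gp_head_def)
qed

lemma
  assumes "k \<le> p" and "length (fst \<xi>) = p + 2"
  shows gp_tail_face_Suc_Suc: "gp_tail (face mu (p + 1) (Suc (Suc k)) \<xi>) = face mu p (Suc k) (gp_tail \<xi>)"
    and gp_head_face_Suc_Suc: "gp_head (face mu (p + 1) (Suc (Suc k)) \<xi>) = gp_head \<xi>"
proof -
  obtain x xs where "fst \<xi> = x # xs" and "length xs = p + 1"
    using assms by (cases "fst \<xi>") auto
  then show "gp_tail (face mu (p + 1) (Suc (Suc k)) \<xi>) = face mu p (Suc k) (gp_tail \<xi>)"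
    and "gp_head (face mu (p + 1) (Suc (Suc k)) \<xi>) = gp_head \<xi>"
    using assms by (auto simp: face_def gp_tail_def gp_head_def nth_Cons')
qed

lemma t_hat_eq_gp_tail:
  "fst \<xi> \<noteq> [] \<Longrightarrow> t_hat mu \<xi> = t_hat mu (gp_tail \<xi>) + mu (gp_head \<xi>)"
  by (cases "fst \<xi>")
    (simp_all add: t_hat_def gp_head_def sum.lessThan_Suc_shift add_ac del: sum.lessThan_Suc)

lemma sum_greaterThanLessThan_Suc_shift:
  "(\<Sum>k\<in>{j<..<Suc n}. f k) = (\<Sum>k\<in>{j..<n}. f (Suc k))"
  by (simp only: atLeastSucLessThan_greaterThanLessThan[symmetric] sum.atLeast_Suc_lessThan_Suc_shift comp_def)

lemma string_h_0:
  assumes "fst \<xi> = x # xs"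
  shows "string_h mu \<xi> 0 = t_hat mu (gp_tail \<xi>)"
  unfolding string_h_def t_hat_def gp_tail_simps assms length_Cons sum_greaterThanLessThan_Suc_shift
  by (simp add: atLeast0LessThan)

lemma string_h_Suc:
  assumes "fst \<xi> = x # xs"
  shows "string_h mu \<xi> (Suc j) = string_h mu (gp_tail \<xi>) j"
  unfolding string_h_def gp_tail_simps assms length_Cons sum_greaterThanLessThan_Suc_shift
  by (simp add: atLeastSucLessThan_greaterThanLessThan)

lemma
  assumes "length (fst \<xi>) = Suc p" and "length (fst \<eta>) = Suc p"
  shows gp_head_gp_bracket: "gp_head (gp_bracket bg bh mu L \<xi> \<eta>) =
      bg (gp_head \<xi>) (gp_head \<eta>) + L (t_hat mu (gp_tail \<xi>)) (gp_head \<eta>) - L (t_hat mu (gp_tail \<eta>)) (gp_head \<xi>)"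
    and gp_tail_gp_bracket: "gp_tail (gp_bracket bg bh mu L \<xi> \<eta>) = gp_bracket bg bh mu L (gp_tail \<xi>) (gp_tail \<eta>)"
proof -
  obtain x xs y ys where xs: "fst \<xi> = x # xs" and ys: "fst \<eta> = y # ys"
    using assms by (cases "fst \<xi>"; cases "fst \<eta>") auto
  show "gp_head (gp_bracket bg bh mu L \<xi> \<eta>) =
      bg (gp_head \<xi>) (gp_head \<eta>) + L (t_hat mu (gp_tail \<xi>)) (gp_head \<eta>) - L (t_hat mu (gp_tail \<eta>)) (gp_head \<xi>)"
    using assms by (simp add: gp_bracket_def gp_head_def upt_conv_Cons string_h_0[OF xs]
        string_h_0[OF ys] xs ys del: upt_Suc)
  have "fst (gp_tail (gp_bracket bg bh mu L \<xi> \<eta>)) = fst (gp_bracket bg bh mu L (gp_tail \<xi>) (gp_tail \<eta>))"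
    using assms by (intro nth_equalityI)
      (simp_all add: gp_bracket_def nth_tl string_h_Suc[OF xs] string_h_Suc[OF ys] del: upt_Suc)
  then show "gp_tail (gp_bracket bg bh mu L \<xi> \<eta>) = gp_bracket bg bh mu L (gp_tail \<xi>) (gp_tail \<eta>)"
    by (simp add: prod_eq_iff gp_bracket_def)
qed

section \<open>The square of Delta\<close>

lemma bd_eq_face_0:
  "bd mu p w \<Xi> Y = w (map gp_tail \<Xi>) Y - (\<Sum>k\<le>p. sgn_pow k (w (map (face mu p (Suc k)) \<Xi>) Y))"
  unfolding bd_def Suc_eq_plus1[symmetric] sum.atMost_Suc_shift
  by (simp add: face_0[abs_def] sum_negf)

lemma Delta2_eq_nths:
  "Delta2 w \<Xi> Y = (\<Sum>(m, n)\<in>ordered_pairs (length \<Xi>).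
     sgn_pow (m + n) (w (map gp_tail (nths \<Xi> (- {m, n}))) (gp_head (\<Xi> ! m) # gp_head (\<Xi> ! n) # Y)))"
  unfolding Delta2_eq by (intro sum.cong) (auto simp: ordered_pairs_def remove2_eq_nths)

lemma Delta_Delta_eq_pairs:
  "Delta (Delta w) \<Xi> Y = (\<Sum>(m, n)\<in>ordered_pairs (length \<Xi>). sgn_pow (m + n)
     (w (map gp_tail (map gp_tail (nths \<Xi> (- {m, n})))) (gp_head (gp_tail (\<Xi> ! m)) # gp_head (\<Xi> ! n) # Y)
      - w (map gp_tail (map gp_tail (nths \<Xi> (- {m, n})))) (gp_head (gp_tail (\<Xi> ! n)) # gp_head (\<Xi> ! m) # Y)))"
proof -
  define F where "F u v = w (map gp_tail (map gp_tail (nths \<Xi> (- {u, v})))) (gp_head (gp_tail (\<Xi> ! v)) # gp_head (\<Xi> ! u) # Y)"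
    for u v
  have "Delta w (map gp_tail (remove_nth j \<Xi>)) (gp_head (\<Xi> ! j) # Y) = (\<Sum>i<length \<Xi> - 1. sgn_pow i (F j (skip j i)))"
    if "j < length \<Xi>" for j
    using that Delta_remove_nth[of j "map gp_tail \<Xi>" w] skip_less_bound[OF that]
    by (simp add: remove_nth_map nths_map F_def)
  then have "Delta (Delta w) \<Xi> Y = (\<Sum>j<length \<Xi>. sgn_pow j (\<Sum>i<length \<Xi> - 1. sgn_pow i (F j (skip j i))))"
    unfolding Delta_eq[of "Delta w"] by simp
  also have "\<dots> = (\<Sum>(m, n)\<in>ordered_pairs (length \<Xi>). sgn_pow (m + n) (F n m - F m n))"
    by (rule sum_sgn_pow_skip_antisym)
  finally show ?thesis
    by (simp add: F_def insert_commute)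
qed

lemma bd_Delta2_eq_pairs:
  "bd mu p (Delta2 w) \<Xi> Y = (\<Sum>(m, n)\<in>ordered_pairs (length \<Xi>). \<Sum>k\<le>p + 1. sgn_pow k (sgn_pow (m + n)
     (w (map gp_tail (map (face mu p k) (nths \<Xi> (- {m, n}))))
        (gp_head (face mu p k (\<Xi> ! m)) # gp_head (face mu p k (\<Xi> ! n)) # Y))))"
  unfolding bd_def Delta2_eq_nths length_map sgn_pow_sum
  by (subst sum.swap) (auto simp: ordered_pairs_def nths_map intro!: sum.cong)

lemma sum_faces_of_gp_heads:
  assumes "length (fst \<xi>) = p + 2" "length (fst \<eta>) = p + 2" "\<forall>\<zeta>\<in>set E. length (fst \<zeta>) = p + 2"
  shows "(\<Sum>k\<le>p + 2. sgn_pow k (w (map gp_tail (map (face mu (p + 1) k) E))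
            (gp_head (face mu (p + 1) k \<xi>) # gp_head (face mu (p + 1) k \<eta>) # Y)))
       = w (map gp_tail (map gp_tail E)) (gp_head (gp_tail \<xi>) # gp_head (gp_tail \<eta>) # Y)
         - w (map gp_tail (map gp_tail E))
             ((gp_head \<xi> + gp_head (gp_tail \<xi>)) # (gp_head \<eta> + gp_head (gp_tail \<eta>)) # Y)
         + (\<Sum>k\<le>p. sgn_pow k (w (map (face mu p (Suc k)) (map gp_tail E)) (gp_head \<xi> # gp_head \<eta> # Y)))"
    (is "(\<Sum>k\<le>p + 2. ?F k) = _")
proof -
  have "(\<Sum>k\<le>p + 2. ?F k) = ?F 0 + (?F 1 + (\<Sum>k\<le>p. ?F (Suc (Suc k))))"
    by (simp only: add_2_eq_Suc' sum.atMost_Suc_shift One_nat_def)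
  moreover have "?F 0 = w (map gp_tail (map gp_tail E)) (gp_head (gp_tail \<xi>) # gp_head (gp_tail \<eta>) # Y)"
    by (simp add: face_0[abs_def] face_0)
  moreover have "?F 1 = - w (map gp_tail (map gp_tail E))
               ((gp_head \<xi> + gp_head (gp_tail \<xi>)) # (gp_head \<eta> + gp_head (gp_tail \<eta>)) # Y)"
  proof -
    have tails: "map gp_tail (map (face mu (p + 1) 1) E) = map gp_tail (map gp_tail E)"
      unfolding map_map comp_def using assms(3) by (intro map_cong refl gp_tail_face_1) simp
    show ?thesis
      unfolding tails gp_head_face_1[OF assms(1)] gp_head_face_1[OF assms(2)] by simp
  qed
  moreover have "?F (Suc (Suc k)) = sgn_pow k (w (map (face mu p (Suc k)) (map gp_tail E)) (gp_head \<xi> # gp_head \<eta> # Y))"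
    if "k \<le> p" for k
  proof -
    have tails: "map gp_tail (map (face mu (p + 1) (Suc (Suc k))) E) = map (face mu p (Suc k)) (map gp_tail E)"
      unfolding map_map comp_def using assms(3) that by (intro map_cong refl gp_tail_face_Suc_Suc) simp_all
    show ?thesis
      unfolding tails gp_head_face_Suc_Suc[OF that assms(1)] gp_head_face_Suc_Suc[OF that assms(2)] by simp
  qed
  ultimately show ?thesis
    by simp
qed

lemma Delta_Delta_pair:
  assumes alt: "alternating_map (w (map gp_tail (map gp_tail E))) r"
    and "length (fst \<xi>) = p + 2" "length (fst \<eta>) = p + 2" "\<forall>\<zeta>\<in>set E. length (fst \<zeta>) = p + 2"
    and "length Y + 2 = r"
  shows "w (map gp_tail (map gp_tail E)) (gp_head (gp_tail \<xi>) # gp_head \<eta> # Y)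
           - w (map gp_tail (map gp_tail E)) (gp_head (gp_tail \<eta>) # gp_head \<xi> # Y)
         = - (bd mu p w (map gp_tail E) (gp_head \<xi> # gp_head \<eta> # Y)
              + (\<Sum>k\<le>p + 2. sgn_pow k (w (map gp_tail (map (face mu (p + 1) k) E))
                   (gp_head (face mu (p + 1) k \<xi>) # gp_head (face mu (p + 1) k \<eta>) # Y))))"
  using alternating_map.cross_terms[OF alt \<open>length Y + 2 = r\<close>, of "gp_head \<xi>" "gp_head \<eta>"
      "gp_head (gp_tail \<xi>)" "gp_head (gp_tail \<eta>)"]
  unfolding bd_eq_face_0 sum_faces_of_gp_heads[OF assms(2-4)] by (simp add: algebra_simps)

theorem Delta_Delta:
  assumes alt: "\<And>X. length X = q \<Longrightarrow> set X \<subseteq> gp p \<Longrightarrow> alternating_map (w X) r"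
    and len: "length \<Xi> = q + 2" and gp: "set \<Xi> \<subseteq> gp (p + 2)" and "length Y + 2 = r"
  shows "Delta (Delta w) \<Xi> Y = - (Delta2 (bd mu p w) \<Xi> Y + bd mu (p + 1) (Delta2 w) \<Xi> Y)"
proof -
  have pair: "sgn_pow (m + n)
       (w (map gp_tail (map gp_tail (nths \<Xi> (- {m, n})))) (gp_head (gp_tail (\<Xi> ! m)) # gp_head (\<Xi> ! n) # Y)
        - w (map gp_tail (map gp_tail (nths \<Xi> (- {m, n})))) (gp_head (gp_tail (\<Xi> ! n)) # gp_head (\<Xi> ! m) # Y))
     = - (sgn_pow (m + n) (bd mu p w (map gp_tail (nths \<Xi> (- {m, n}))) (gp_head (\<Xi> ! m) # gp_head (\<Xi> ! n) # Y))
          + (\<Sum>k\<le>p + 2. sgn_pow k (sgn_pow (m + n) (w (map gp_tail (map (face mu (p + 1) k) (nths \<Xi> (- {m, n}))))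
               (gp_head (face mu (p + 1) k (\<Xi> ! m)) # gp_head (face mu (p + 1) k (\<Xi> ! n)) # Y)))))"
    if "m < n" "n < q + 2" for m n
  proof -
    have "length (nths \<Xi> (- {m, n})) = q" and "set (nths \<Xi> (- {m, n})) \<subseteq> gp (p + 2)"
      using that len length_nths_Compl2[of m \<Xi> n] set_nths_subset_gp[OF gp] by auto
    then have "alternating_map (w (map gp_tail (map gp_tail (nths \<Xi> (- {m, n}))))) r"
      by (intro alt) auto
    moreover have "length (fst (\<Xi> ! m)) = p + 2" "length (fst (\<Xi> ! n)) = p + 2"
      using that len gp by (auto simp: length_nth_gp)
    moreover have "\<forall>\<zeta>\<in>set (nths \<Xi> (- {m, n})). length (fst \<zeta>) = p + 2"
      using set_nths_subset_gp[OF gp, of "- {m, n}"] by auto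
    ultimately have "w (map gp_tail (map gp_tail (nths \<Xi> (- {m, n})))) (gp_head (gp_tail (\<Xi> ! m)) # gp_head (\<Xi> ! n) # Y)
        - w (map gp_tail (map gp_tail (nths \<Xi> (- {m, n})))) (gp_head (gp_tail (\<Xi> ! n)) # gp_head (\<Xi> ! m) # Y)
      = - (bd mu p w (map gp_tail (nths \<Xi> (- {m, n}))) (gp_head (\<Xi> ! m) # gp_head (\<Xi> ! n) # Y)
           + (\<Sum>k\<le>p + 2. sgn_pow k (w (map gp_tail (map (face mu (p + 1) k) (nths \<Xi> (- {m, n}))))
                (gp_head (face mu (p + 1) k (\<Xi> ! m)) # gp_head (face mu (p + 1) k (\<Xi> ! n)) # Y))))"
      using \<open>length Y + 2 = r\<close> by (rule Delta_Delta_pair)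
    then show ?thesis
      by (simp only: sgn_pow_minus sgn_pow_add sgn_pow_diff sgn_pow_sum sgn_pow_commute[of "m + n"])
  qed
  show ?thesis
    unfolding Delta_Delta_eq_pairs Delta2_eq_nths bd_Delta2_eq_pairs len sum_negf[symmetric] sum.distrib[symmetric]
      add.assoc[of p 1 1] one_add_one
    by (rule sum.cong) (auto simp only: ordered_pairs_def mem_Collect_eq prod.case intro: pair)
qed

section \<open>The anticommutator of delta and Delta\<close>

lemma delta_1_Cons_Cons:
  assumes alt: "alternating_map (w X) (Suc (length Z))"
  shows "delta_1 bg mu rho01 w X (x # y # Z) =
     rho01 (mu x) (w X (y # Z)) - rho01 (mu y) (w X (x # Z)) - w X (bg x y # Z)
     + (\<Sum>b<length Z. sgn_pow b (w X (bg x (Z ! b) # y # remove_nth b Z)))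
     - (\<Sum>b<length Z. sgn_pow b (w X (bg y (Z ! b) # x # remove_nth b Z)))
     + delta_1 bg mu rho01 (\<lambda>_ Y. w X (x # y # Y)) X' Z"
proof -
  define F where "F a b = sgn_pow (a + b) (w X (bg ((x # y # Z) ! a) ((x # y # Z) ! b) # remove2 a b (x # y # Z)))"
    for a b
  have "F (Suc (Suc a)) (Suc (Suc b)) = sgn_pow (a + b) (w X (x # y # bg (Z ! a) (Z ! b) # remove2 a b Z))"
    if "a < b" "b < length Z" for a b
    using alternating_map.rotate3[OF alt, of "remove2 a b Z"] that
    by (simp add: F_def remove2_def)
  then have "(\<Sum>(a, b)\<in>ordered_pairs (length (x # y # Z)). F a b)
      = F 0 1 + (\<Sum>b<length Z. F 0 (Suc (Suc b)) + F 1 (Suc (Suc b)))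
        + (\<Sum>(a, b)\<in>ordered_pairs (length Z). sgn_pow (a + b) (w X (x # y # bg (Z ! a) (Z ! b) # remove2 a b Z)))"
    by (simp add: sum_ordered_pairs_second sum.lessThan_Suc_shift sum.distrib add_ac del: sum.lessThan_Suc)
  also have "\<dots> = - w X (bg x y # Z)
      + (\<Sum>b<length Z. sgn_pow b (w X (bg x (Z ! b) # y # remove_nth b Z)))
      - (\<Sum>b<length Z. sgn_pow b (w X (bg y (Z ! b) # x # remove_nth b Z)))
      + (\<Sum>(a, b)\<in>ordered_pairs (length Z). sgn_pow (a + b) (w X (x # y # bg (Z ! a) (Z ! b) # remove2 a b Z)))"
    by (simp add: F_def remove2_def sum.distrib sum_subtractf numeral_2_eq_2)
  finally show ?thesis
    unfolding delta_1_eq F_def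
    by (simp add: sum.lessThan_Suc_shift algebra_simps del: sum.lessThan_Suc)
qed

locale crossed_module_rep =
  fixes bg :: "'g::ab_group_add \<Rightarrow> 'g \<Rightarrow> 'g"
    and mu :: "'g \<Rightarrow> 'h::ab_group_add" and L :: "'h \<Rightarrow> 'g \<Rightarrow> 'g" and rho01 :: "'h \<Rightarrow> 'w::ab_group_add \<Rightarrow> 'w"
  assumes additive_L: "additive (\<lambda>y. L y x)"
    and L_mu: "L (mu x) z = bg x z"
    and additive_rho01_left: "additive (\<lambda>y. rho01 y w)"
    and additive_rho01_right: "additive (rho01 y)"
begin

lemma rho_r_sum_sgn_pow:
  "rho_r L rho01 y (\<lambda>Y. \<Sum>i\<in>A. sgn_pow i (\<beta> i Y)) Z = (\<Sum>i\<in>A. sgn_pow i (rho_r L rho01 y (\<beta> i) Z))"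
  by (simp add: rho_r_def additive.sum[OF additive_rho01_right] additive.sgn_pow[OF additive_rho01_right]
      sgn_pow_sum sum_subtractf sum.swap[of _ "{..<length Z}"])

lemma rho_r_add_mu:
  assumes alt: "alternating_map \<beta> (Suc (length Z))"
  shows "rho_r L rho01 (y + mu x) (\<lambda>Y. \<beta> (a # Y)) Z - rho_r L rho01 y \<beta> (a # Z)
       = rho01 (mu x) (\<beta> (a # Z)) + (\<Sum>k<length Z. sgn_pow k (\<beta> (bg x (Z ! k) # a # remove_nth k Z)))
         + \<beta> (L y a # Z)"
proof -
  have "\<beta> (a # Z[k := L (y + mu x) (Z ! k)]) = \<beta> (a # Z[k := L y (Z ! k)])
          - sgn_pow k (\<beta> (bg x (Z ! k) # a # remove_nth k Z))"
    if "k < length Z" for k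
  proof -
    have "\<beta> (a # Z[k := L (y + mu x) (Z ! k)]) = \<beta> (a # Z[k := L y (Z ! k)]) + \<beta> (a # Z[k := bg x (Z ! k)])"
      using alternating_map.add_slot[OF alt, of "a # Z" "Suc k" "L y (Z ! k)" "bg x (Z ! k)"] that
      by (simp add: additive.add[OF additive_L] L_mu)
    moreover have "\<beta> (a # Z[k := bg x (Z ! k)]) = - sgn_pow k (\<beta> (bg x (Z ! k) # a # remove_nth k Z))"
      using alternating_map.update_to_front[OF alt _ that] by simp
    ultimately show ?thesis
      by simp
  qed
  then have shifted: "rho_r L rho01 (y + mu x) (\<lambda>Y. \<beta> (a # Y)) Z
      = rho01 y (\<beta> (a # Z)) + rho01 (mu x) (\<beta> (a # Z)) - (\<Sum>k<length Z. \<beta> (a # Z[k := L y (Z ! k)]))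
        + (\<Sum>k<length Z. sgn_pow k (\<beta> (bg x (Z ! k) # a # remove_nth k Z)))"
    by (simp add: rho_r_def additive.add[OF additive_rho01_left] sum_subtractf)
  have unshifted: "rho_r L rho01 y \<beta> (a # Z)
      = rho01 y (\<beta> (a # Z)) - (\<beta> (L y a # Z) + (\<Sum>k<length Z. \<beta> (a # Z[k := L y (Z ! k)])))"
    by (simp add: rho_r_def sum.lessThan_Suc_shift del: sum.lessThan_Suc)
  show ?thesis
    unfolding shifted unshifted by (simp add: algebra_simps)
qed

lemma delta_1_Delta2:
  "delta_1 bg mu rho01 (Delta2 w) \<Xi> Y = (\<Sum>(m, n)\<in>ordered_pairs (length \<Xi>). sgn_pow (m + n)
     (delta_1 bg mu rho01 (\<lambda>_ Y'. w (map gp_tail (nths \<Xi> (- {m, n}))) (gp_head (\<Xi> ! m) # gp_head (\<Xi> ! n) # Y')) \<Xi> Y))"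
proof -
  let ?w = "\<lambda>m n Y'. w (map gp_tail (nths \<Xi> (- {m, n}))) (gp_head (\<Xi> ! m) # gp_head (\<Xi> ! n) # Y')"
  have "(\<Sum>k<length Y. sgn_pow k (rho01 (mu (Y ! k)) (Delta2 w \<Xi> (remove_nth k Y))))
      = (\<Sum>(m, n)\<in>ordered_pairs (length \<Xi>). sgn_pow (m + n)
           (\<Sum>k<length Y. sgn_pow k (rho01 (mu (Y ! k)) (?w m n (remove_nth k Y)))))"
    unfolding Delta2_eq_nths split_def additive.sum[OF additive_rho01_right]
      additive.sgn_pow[OF additive_rho01_right] sgn_pow_sum
    by (subst sum.swap) (simp add: sgn_pow_commute)
  moreover have "(\<Sum>(a, b)\<in>ordered_pairs (length Y). sgn_pow (a + b) (Delta2 w \<Xi> (bg (Y ! a) (Y ! b) # remove2 a b Y)))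
      = (\<Sum>(m, n)\<in>ordered_pairs (length \<Xi>). sgn_pow (m + n)
           (\<Sum>(a, b)\<in>ordered_pairs (length Y). sgn_pow (a + b) (?w m n (bg (Y ! a) (Y ! b) # remove2 a b Y))))"
    unfolding Delta2_eq_nths split_def sgn_pow_sum
    by (subst sum.swap) (simp add: sgn_pow_commute)
  ultimately show ?thesis
    unfolding delta_1_eq by (simp add: sum.distrib split_def)
qed

context
  fixes bh :: "'h \<Rightarrow> 'h \<Rightarrow> 'h" and \<omega> :: "('g list \<times> 'h) list \<Rightarrow> 'g list \<Rightarrow> 'w" and p q r :: nat
    and \<Xi> :: "('g list \<times> 'h) list" and Z :: "'g list"
  assumes alternating: "\<And>X. length X = q \<Longrightarrow> set X \<subseteq> gp p \<Longrightarrow> alternating_map (\<omega> X) r"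
    and length_\<Xi>: "length \<Xi> = q + 2" and gp_\<Xi>: "set \<Xi> \<subseteq> gp (p + 1)" and length_Z: "length Z + 1 = r"
begin

(* For positions u, v of Xi: lead v = x_v^0 and rest u v = d_0 Xi(u, v). rho_Delta_term and
   Delta_rho_term are the rho-parts of delta(Delta omega) and Delta(delta omega); bracket_term m n s
   are the terms with the bracket [d_0 xi_m, d_0 xi_n], which cancel between the two. *)
definition lead :: "nat \<Rightarrow> 'g" where
  "lead v = gp_head (\<Xi> ! v)"

definition rest :: "nat \<Rightarrow> nat \<Rightarrow> ('g list \<times> 'h) list" where
  "rest u v = map gp_tail (nths \<Xi> (- {u, v}))"

definition bracket_term :: "nat \<Rightarrow> nat \<Rightarrow> nat \<Rightarrow> 'w" where
  "bracket_term m n s =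
     \<omega> (gp_bracket bg bh mu L (gp_tail (\<Xi> ! m)) (gp_tail (\<Xi> ! n)) # map gp_tail (nths \<Xi> (- {m, n, s}))) (lead s # Z)"

definition rho_Delta_term :: "nat \<Rightarrow> nat \<Rightarrow> 'w" where
  "rho_Delta_term u v = rho_r L rho01 (t_hat mu (\<Xi> ! u)) (\<lambda>Y. \<omega> (rest u v) (lead v # Y)) Z"

definition Delta_rho_term :: "nat \<Rightarrow> nat \<Rightarrow> 'w" where
  "Delta_rho_term u v = rho_r L rho01 (t_hat mu (gp_tail (\<Xi> ! u))) (\<omega> (rest u v)) (lead v # Z)"

lemma rest_commute: "rest u v = rest v u"
  by (simp add: rest_def insert_commute)

lemma length_fst_nth: "i < q + 2 \<Longrightarrow> length (fst (\<Xi> ! i)) = Suc p"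
  using length_nth_gp[OF gp_\<Xi>] length_\<Xi> by simp

lemma alternating_rest:
  assumes "u < q + 2" "v < q + 2" "u \<noteq> v"
  shows "alternating_map (\<omega> (rest u v)) r"
proof (rule alternating)
  show "length (rest u v) = q"
    using assms length_\<Xi> length_nths_Compl2[of u \<Xi> v] by (simp add: rest_def)
  have "set (nths \<Xi> (- {u, v})) \<subseteq> gp (Suc p)"
    using set_nths_subset_gp[OF gp_\<Xi>] by simp
  then show "set (rest u v) \<subseteq> gp p"
    unfolding rest_def by (rule set_map_gp_tail)
qed

lemma delta_r_Delta_rho_part:
  "(\<Sum>j<q + 2. sgn_pow j (rho_r L rho01 (t_hat mu (\<Xi> ! j)) (Delta \<omega> (remove_nth j \<Xi>)) Z))
   = (\<Sum>(m, n)\<in>ordered_pairs (q + 2). sgn_pow (m + n) (rho_Delta_term n m - rho_Delta_term m n))"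
proof -
  have "Delta \<omega> (remove_nth j \<Xi>) = (\<lambda>Y. \<Sum>i<q + 2 - 1. sgn_pow i (\<omega> (rest j (skip j i)) (lead (skip j i) # Y)))"
    if "j < q + 2" for j
    using that Delta_remove_nth[of j \<Xi> \<omega>] length_\<Xi> by (intro ext) (simp add: rest_def lead_def)
  then have "(\<Sum>j<q + 2. sgn_pow j (rho_r L rho01 (t_hat mu (\<Xi> ! j)) (Delta \<omega> (remove_nth j \<Xi>)) Z))
      = (\<Sum>j<q + 2. sgn_pow j (\<Sum>i<q + 2 - 1. sgn_pow i (rho_Delta_term j (skip j i))))"
    by (simp add: rho_r_sum_sgn_pow rho_Delta_term_def del: sum.lessThan_Suc)
  also have "\<dots> = (\<Sum>(m, n)\<in>ordered_pairs (q + 2). sgn_pow (m + n) (rho_Delta_term n m - rho_Delta_term m n))"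
    by (rule sum_sgn_pow_skip_antisym)
  finally show ?thesis .
qed

lemma Delta_gp_bracket_Cons_remove2:
  assumes "m < n" "n < q + 2"
  shows "Delta \<omega> (gp_bracket bg bh mu L (\<Xi> ! m) (\<Xi> ! n) # remove2 m n \<Xi>) Z
    = \<omega> (rest m n) (gp_head (gp_bracket bg bh mu L (\<Xi> ! m) (\<Xi> ! n)) # Z)
      + (\<Sum>s\<in>{..<q + 2} - {m, n}. sgn_pow (Suc (unskip m (unskip n s))) (bracket_term m n s))"
proof -
  have "length (remove2 m n \<Xi>) = q"
    using assms length_\<Xi> by (simp add: remove2_def)
  moreover have "remove2 m n \<Xi> ! i = \<Xi> ! skip n (skip m i)" if "i < q" for i
    using that assms length_\<Xi> by (simp add: remove2_def nth_remove_nth skip_def)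
  moreover have "remove_nth i (remove2 m n \<Xi>) = nths \<Xi> (- {m, n, skip n (skip m i)})" for i
    using assms by (simp add: remove2_def remove_nth_remove_nth_remove_nth insert_commute)
  moreover have "gp_tail (gp_bracket bg bh mu L (\<Xi> ! m) (\<Xi> ! n)) = gp_bracket bg bh mu L (gp_tail (\<Xi> ! m)) (gp_tail (\<Xi> ! n))"
    using assms by (intro gp_tail_gp_bracket) (simp_all add: length_fst_nth)
  ultimately have "Delta \<omega> (gp_bracket bg bh mu L (\<Xi> ! m) (\<Xi> ! n) # remove2 m n \<Xi>) Z
      = \<omega> (rest m n) (gp_head (gp_bracket bg bh mu L (\<Xi> ! m) (\<Xi> ! n)) # Z)
        + (\<Sum>i<q + 2 - 2. (\<lambda>s. sgn_pow (Suc (unskip m (unskip n s))) (bracket_term m n s)) (skip n (skip m i)))"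
    using assms by (simp add: Delta_Cons rest_def remove2_eq_nths bracket_term_def lead_def)
  also have "\<dots> = \<omega> (rest m n) (gp_head (gp_bracket bg bh mu L (\<Xi> ! m) (\<Xi> ! n)) # Z)
      + (\<Sum>s\<in>{..<q + 2} - {m, n}. sgn_pow (Suc (unskip m (unskip n s))) (bracket_term m n s))"
    using sum_skip_skip_reindex[OF assms, where F = "\<lambda>s. sgn_pow (Suc (unskip m (unskip n s))) (bracket_term m n s)"]
    by simp
  finally show ?thesis .
qed

lemma delta_r_Delta_bracket_part:
  "(\<Sum>(m, n)\<in>ordered_pairs (q + 2).
      sgn_pow (m + n) (Delta \<omega> (gp_bracket bg bh mu L (\<Xi> ! m) (\<Xi> ! n) # remove2 m n \<Xi>) Z))
    = (\<Sum>(m, n)\<in>ordered_pairs (q + 2).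
         sgn_pow (m + n) (\<omega> (rest m n) (gp_head (gp_bracket bg bh mu L (\<Xi> ! m) (\<Xi> ! n)) # Z)))
      + (\<Sum>(m, n)\<in>ordered_pairs (q + 2). sgn_pow (m + n)
           (\<Sum>s\<in>{..<q + 2} - {m, n}. sgn_pow (Suc (unskip m (unskip n s))) (bracket_term m n s)))"
  unfolding sum.distrib[symmetric]
  by (intro sum.cong) (auto simp: ordered_pairs_def Delta_gp_bracket_Cons_remove2)

lemma delta_r_map_gp_tail_remove_nth:
  assumes v: "v < q + 2"
  shows "delta_r bg bh mu L rho01 \<omega> (map gp_tail (remove_nth v \<Xi>)) (lead v # Z)
    = (\<Sum>i<q + 2 - 1. sgn_pow i (Delta_rho_term (skip v i) v))
      + (\<Sum>(m, n)\<in>{(m, n)\<in>ordered_pairs (q + 2). m \<noteq> v \<and> n \<noteq> v}.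
           sgn_pow (unskip v m + unskip v n) (bracket_term m n v))"
proof -
  let ?H = "map gp_tail (remove_nth v \<Xi>)"
  have length_H: "length ?H = q + 2 - 1"
    using v length_\<Xi> by simp
  have nth_H: "?H ! i = gp_tail (\<Xi> ! skip v i)" if "i < q + 1" for i
    using that v length_\<Xi> by (simp add: nth_remove_nth)
  have rho_part: "(\<Sum>i<length ?H. sgn_pow i (rho_r L rho01 (t_hat mu (?H ! i)) (\<omega> (remove_nth i ?H)) (lead v # Z)))
      = (\<Sum>i<q + 2 - 1. sgn_pow i (Delta_rho_term (skip v i) v))"
    unfolding length_H
    by (intro sum.cong refl)
      (simp add: nth_H remove_nth_map remove_nth_remove_nth Delta_rho_term_def rest_def insert_commute)
  have "(\<Sum>(m, n)\<in>ordered_pairs (length ?H).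
        sgn_pow (m + n) (\<omega> (gp_bracket bg bh mu L (?H ! m) (?H ! n) # remove2 m n ?H) (lead v # Z)))
      = (\<Sum>(m, n)\<in>ordered_pairs (q + 2 - 1).
           sgn_pow (unskip v (skip v m) + unskip v (skip v n)) (bracket_term (skip v m) (skip v n) v))"
    unfolding length_H
    by (intro sum.cong refl)
      (auto simp: ordered_pairs_def nth_H remove2_def remove_nth_map remove_nth_remove_nth_remove_nth
        bracket_term_def insert_commute)
  also have "\<dots> = (\<Sum>(m, n)\<in>{(m, n)\<in>ordered_pairs (q + 2). m \<noteq> v \<and> n \<noteq> v}.
                     sgn_pow (unskip v m + unskip v n) (bracket_term m n v))"
    by (rule sum_ordered_pairs_skip_reindex[OF v, where F = "\<lambda>m n. sgn_pow (unskip v m + unskip v n) (bracket_term m n v)"])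
  finally show ?thesis
    by (simp only: delta_r_eq rho_part)
qed

lemma Delta_delta_r:
  "Delta (delta_r bg bh mu L rho01 \<omega>) \<Xi> Z
   = (\<Sum>(m, n)\<in>ordered_pairs (q + 2). sgn_pow (m + n) (Delta_rho_term m n - Delta_rho_term n m))
     + (\<Sum>(m, n)\<in>ordered_pairs (q + 2). \<Sum>v\<in>{..<q + 2} - {m, n}.
          sgn_pow v (sgn_pow (unskip v m + unskip v n) (bracket_term m n v)))"
proof -
  have "Delta (delta_r bg bh mu L rho01 \<omega>) \<Xi> Z
      = (\<Sum>v<q + 2. sgn_pow v (\<Sum>i<q + 2 - 1. sgn_pow i (Delta_rho_term (skip v i) v)))
        + (\<Sum>v<q + 2. \<Sum>(m, n)\<in>{(m, n)\<in>ordered_pairs (q + 2). m \<noteq> v \<and> n \<noteq> v}.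
             sgn_pow v (sgn_pow (unskip v m + unskip v n) (bracket_term m n v)))"
    unfolding Delta_eq length_\<Xi> sum.distrib[symmetric]
    by (intro sum.cong refl)
      (simp add: delta_r_map_gp_tail_remove_nth lead_def[symmetric] sgn_pow_sum split_def)
  also have "(\<Sum>v<q + 2. sgn_pow v (\<Sum>i<q + 2 - 1. sgn_pow i (Delta_rho_term (skip v i) v)))
      = (\<Sum>(m, n)\<in>ordered_pairs (q + 2). sgn_pow (m + n) (Delta_rho_term m n - Delta_rho_term n m))"
    by (rule sum_sgn_pow_skip_antisym[where F = "\<lambda>j u. Delta_rho_term u j"])
  finally show ?thesis
    by (simp only: sum_swap_ordered_pairs)
qed

lemma rho_Delta_term_minus_Delta_rho_term:
  assumes "u < q + 2" "v < q + 2" "u \<noteq> v"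
  shows "rho_Delta_term u v - Delta_rho_term u v
    = rho01 (mu (lead u)) (\<omega> (rest u v) (lead v # Z))
      + (\<Sum>k<length Z. sgn_pow k (\<omega> (rest u v) (bg (lead u) (Z ! k) # lead v # remove_nth k Z)))
      + \<omega> (rest u v) (L (t_hat mu (gp_tail (\<Xi> ! u))) (lead v) # Z)"
proof -
  have alt: "alternating_map (\<omega> (rest u v)) (Suc (length Z))"
    using alternating_rest[OF assms] length_Z by simp
  have "t_hat mu (\<Xi> ! u) = t_hat mu (gp_tail (\<Xi> ! u)) + mu (lead u)"
    using length_fst_nth[OF assms(1)] by (auto simp: lead_def intro: t_hat_eq_gp_tail)
  then show ?thesis
    unfolding rho_Delta_term_def Delta_rho_term_def by (simp only: rho_r_add_mu[OF alt])
qed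

lemma omega_rest_gp_head_gp_bracket:
  assumes "m < n" "n < q + 2"
  shows "\<omega> (rest m n) (gp_head (gp_bracket bg bh mu L (\<Xi> ! m) (\<Xi> ! n)) # Z)
    = \<omega> (rest m n) (bg (lead m) (lead n) # Z) + \<omega> (rest m n) (L (t_hat mu (gp_tail (\<Xi> ! m))) (lead n) # Z)
      - \<omega> (rest m n) (L (t_hat mu (gp_tail (\<Xi> ! n))) (lead m) # Z)"
proof -
  have "alternating_map (\<omega> (rest m n)) r"
    using assms by (intro alternating_rest) simp_all
  then have slot: "additive (\<lambda>a. \<omega> (rest m n) ([] @ a # Z))"
    using length_Z by (intro alternating_map.additive_slot) simp_all
  show ?thesis
    using assms additive.add[OF slot] additive.diff[OF slot]
    by (simp add: gp_head_gp_bracket length_fst_nth lead_def)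
qed

lemma delta_r_Delta_pair:
  assumes "m < n" "n < q + 2"
  shows "(rho_Delta_term n m - rho_Delta_term m n)
       + \<omega> (rest m n) (gp_head (gp_bracket bg bh mu L (\<Xi> ! m) (\<Xi> ! n)) # Z)
       + (Delta_rho_term m n - Delta_rho_term n m)
     = delta_1 bg mu rho01 (\<lambda>_ Y. \<omega> (rest m n) (lead m # lead n # Y)) \<Xi> Z
       - delta_1 bg mu rho01 \<omega> (rest m n) (lead m # lead n # Z)"
proof -
  have "alternating_map (\<omega> (rest m n)) (Suc (length Z))"
    using alternating_rest[of m n] assms length_Z by simp
  from delta_1_Cons_Cons[where w = \<omega> and X = "rest m n" and X' = \<Xi>, OF this]
  show ?thesis
    using rho_Delta_term_minus_Delta_rho_term[of m n] rho_Delta_term_minus_Delta_rho_term[of n m] assms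
    unfolding omega_rest_gp_head_gp_bracket[OF assms] rest_commute[of n m]
    by (simp add: algebra_simps)
qed

theorem delta_r_Delta_anticommutator:
  "delta_r bg bh mu L rho01 (Delta \<omega>) \<Xi> Z + Delta (delta_r bg bh mu L rho01 \<omega>) \<Xi> Z
   = delta_1 bg mu rho01 (Delta2 \<omega>) \<Xi> Z - Delta2 (delta_1 bg mu rho01 \<omega>) \<Xi> Z"
proof -
  let ?pair = "\<lambda>m n. (rho_Delta_term n m - rho_Delta_term m n)
       + \<omega> (rest m n) (gp_head (gp_bracket bg bh mu L (\<Xi> ! m) (\<Xi> ! n)) # Z)
       + (Delta_rho_term m n - Delta_rho_term n m)"
  have "delta_r bg bh mu L rho01 (Delta \<omega>) \<Xi> Z + Delta (delta_r bg bh mu L rho01 \<omega>) \<Xi> Z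
      = (\<Sum>(m, n)\<in>ordered_pairs (q + 2). sgn_pow (m + n) (rho_Delta_term n m - rho_Delta_term m n))
        + (\<Sum>(m, n)\<in>ordered_pairs (q + 2).
             sgn_pow (m + n) (\<omega> (rest m n) (gp_head (gp_bracket bg bh mu L (\<Xi> ! m) (\<Xi> ! n)) # Z)))
        + (\<Sum>(m, n)\<in>ordered_pairs (q + 2). sgn_pow (m + n) (Delta_rho_term m n - Delta_rho_term n m))
        + ((\<Sum>(m, n)\<in>ordered_pairs (q + 2). sgn_pow (m + n)
              (\<Sum>s\<in>{..<q + 2} - {m, n}. sgn_pow (Suc (unskip m (unskip n s))) (bracket_term m n s)))
           + (\<Sum>(m, n)\<in>ordered_pairs (q + 2). \<Sum>s\<in>{..<q + 2} - {m, n}.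
                sgn_pow s (sgn_pow (unskip s m + unskip s n) (bracket_term m n s))))"
    unfolding delta_r_eq length_\<Xi> delta_r_Delta_rho_part delta_r_Delta_bracket_part Delta_delta_r
    by (simp add: algebra_simps)
  also have "\<dots> = (\<Sum>(m, n)\<in>ordered_pairs (q + 2). sgn_pow (m + n) (?pair m n))"
    unfolding sum_sgn_pow_unskip_cancel by (simp add: sum.distrib[symmetric] split_def)
  also have "\<dots> = (\<Sum>(m, n)\<in>ordered_pairs (q + 2). sgn_pow (m + n)
      (delta_1 bg mu rho01 (\<lambda>_ Y. \<omega> (rest m n) (lead m # lead n # Y)) \<Xi> Z
       - delta_1 bg mu rho01 \<omega> (rest m n) (lead m # lead n # Z)))"
    by (rule sum.cong) (auto simp only: ordered_pairs_def mem_Collect_eq prod.case delta_r_Delta_pair)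
  also have "\<dots> = delta_1 bg mu rho01 (Delta2 \<omega>) \<Xi> Z - Delta2 (delta_1 bg mu rho01 \<omega>) \<Xi> Z"
    unfolding delta_1_Delta2 Delta2_eq_nths length_\<Xi>
    by (simp add: sum_subtractf split_def rest_def lead_def)
  finally show ?thesis .
qed

end

end

lemma alternating_map_if_alt_multilinear:
  assumes "alt_multilinear s (+) UNIV sw n f"
  shows "alternating_map f n"
  using assms unfolding alt_multilinear_def by (intro alternating_map.intro) (simp, blast)

lemma crossed_module_rep_if_two_representation:
  assumes "crossed_module sg sh bg bh mu L"
    and "two_representation sg sh sv sw bg bh mu L phi rho01 rho00 rho1"
  shows "crossed_module_rep bg mu L rho01"
proof (rule crossed_module_rep.intro)
  have "lin_family sh sg sg L" and "L (mu x) z = bg x z" for x z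
    using assms(1) by (simp_all add: crossed_module_def)
  then show "additive (\<lambda>y. L y x)" and "L (mu x) z = bg x z" for x z
    by (simp_all add: lin_family_def additive_def)
  have "lin_family sh sw sw rho01"
    using assms(2) by (simp add: two_representation_def)
  then show "additive (\<lambda>y. rho01 y w)" and "additive (rho01 y)" for w y
    by (simp_all add: lin_family_def additive_def linear_iff)
qed

theorem mainTheorem14:
  fixes sg :: "'k::field \<Rightarrow> 'g::ab_group_add \<Rightarrow> 'g" and sh :: "'k \<Rightarrow> 'h::ab_group_add \<Rightarrow> 'h"
    and sv :: "'k \<Rightarrow> 'v::ab_group_add \<Rightarrow> 'v" and sw :: "'k \<Rightarrow> 'w::ab_group_add \<Rightarrow> 'w"
    and bg :: "'g \<Rightarrow> 'g \<Rightarrow> 'g" and bh :: "'h \<Rightarrow> 'h \<Rightarrow> 'h"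
    and mu :: "'g \<Rightarrow> 'h" and L :: "'h \<Rightarrow> 'g \<Rightarrow> 'g"
    and phi :: "'w \<Rightarrow> 'v" and rho01 :: "'h \<Rightarrow> 'w \<Rightarrow> 'w" and rho00 :: "'h \<Rightarrow> 'v \<Rightarrow> 'v"
    and rho1 :: "'g \<Rightarrow> 'v \<Rightarrow> 'w"
    and \<omega> :: "('g list \<times> 'h) list \<Rightarrow> 'g list \<Rightarrow> 'w"
    and p q r :: nat
  assumes "crossed_module sg sh bg bh mu L"
    and "two_representation sg sh sv sw bg bh mu L phi rho01 rho00 rho1"
    and "r > 2"
    and "cochain sg sh sw p q r \<omega>"
  shows "(\<forall>\<Xi> Z. length \<Xi> = q + 2 \<and> set \<Xi> \<subseteq> gp (p + 1) \<and> length Z = r - 1 \<longrightarrow>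
            delta_r bg bh mu L rho01 (Delta \<omega>) \<Xi> Z + Delta (delta_r bg bh mu L rho01 \<omega>) \<Xi> Z
            = delta_1 bg mu rho01 (Delta2 \<omega>) \<Xi> Z - Delta2 (delta_1 bg mu rho01 \<omega>) \<Xi> Z)
       \<and> (\<forall>\<Xi> Z. length \<Xi> = q + 2 \<and> set \<Xi> \<subseteq> gp (p + 2) \<and> length Z = r - 2 \<longrightarrow>
            Delta (Delta \<omega>) \<Xi> Z
            = - (Delta2 (bd mu p \<omega>) \<Xi> Z + bd mu (p + 1) (Delta2 \<omega>) \<Xi> Z))"
proof -
  interpret crossed_module_rep bg mu L rho01
    using assms(1,2) by (rule crossed_module_rep_if_two_representation)
  have alternating: "alternating_map (\<omega> X) r" if "length X = q" "set X \<subseteq> gp p" for X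
    using assms(4) that unfolding cochain_def by (blast intro: alternating_map_if_alt_multilinear)
  show ?thesis
    by (intro conjI allI impI; elim conjE;
        rule delta_r_Delta_anticommutator[OF alternating] Delta_Delta[OF alternating])
      (use \<open>r > 2\<close> in simp_all)
qed

end
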